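(* Let $x=(x_1,\dots,x_n)$ and let $f\in R(x)$. Then for every $u\in\mathbb{R}^n$ and every sufficiently small $\epsilon>0$ we have \[ lc\big(lc(f)(p^u x)\big) = lc\big(f(p^{\epsilon u}x)\big) \qquad\text{and}\qquad val(f)+ \epsilon \, val\big(lc(f)(p^u x)\big) = val\big(f(p^{\epsilon u} x)\big). \]
   Context: Let $F=F(x)$ be the field consisting of $0$ and all formal series $f=\sum_{t\in T} a_t(x) p^t$, where $T\subset\mathbb{R}$ is discrete and bounded from below, the coefficients $a_t(x)$ are rational functions of $x=(x_1,\dots,x_n)$ independent of $p$, and $a_{\min T}\neq 0$. For nonzero $f$, the valuation is $val(f)=\min T$ and the leading coefficient is $lc(f)=a_{val(f)}$. For $\epsilon\in\mathbb{R}^n$ write $p^{\epsilon}x=(p^{\epsilon_1}x_1,\dots,p^{\epsilon_n}x_n)$. For a rational function $r\in\mathbb{C}(x)$ define $\deg_\epsilon(r)=val(r(p^\epsilon x))$ (expanding $r(p^\epsilon x)$ as a series in $p$) and $\deg(r)=-\inf_{\epsilon\neq 0}\deg_\epsilon(r)/\|\epsilon\|$, with $\|\cdot\|$ the supremum norm. The subfield $R(x)\subset F(x)$ consists of those $f=\sum_{t\in T}a_t p^t$ with $\inf_{t\in T,\,t>val(f)} \deg(a_t)/(t-val(f))<\infty$. For $f\in R(x)$ and $\epsilon$ small enough, $f(p^\epsilon x)$ denotes the series obtained by substituting $p^\epsilon x$ for $x$ in every coefficient $a_t$, expanding in powers of $p$ and summing (this is a well-defined element of $F(x)$ for $\|\epsilon\|$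 small enough). The same conventions apply to $lc(f)$ regarded as an element of $F(x)$. *)

theory Defs
  imports Complex_Main "HOL-Library.Poly_Mapping" "HOL-Computational_Algebra.Fraction_Field"
begin

text \<open>Variables x_i are indexed by a finite type 'n (the linorder is only needed for
  Isabelle's integral-domain instance on polynomials and carries no meaning).\<close>

type_synonym 'n mpoly = "('n \<Rightarrow>\<^sub>0 nat) \<Rightarrow>\<^sub>0 complex"
type_synonym 'n ratfun = "'n mpoly fract"

text \<open>A formal series sum a_t p^t is its coefficient function real => coefficient.
  Elements of F: support is discrete and bounded below (finite below every bound).\<close>

definition is_series :: "(real \<Rightarrow> 'a::zero) \<Rightarrow> bool" where
  "is_series g \<longleftrightarrow> (\<forall>B. finite {t. g t \<noteq> 0 \<and> t \<le> B})"

definition val :: "(real \<Rightarrow> 'a::zero) \<Rightarrow> real" where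
  "val g = (LEAST t. g t \<noteq> 0)"

definition lc :: "(real \<Rightarrow> 'a::zero) \<Rightarrow> 'a" where
  "lc g = g (val g)"

definition ser_mult :: "(real \<Rightarrow> 'a::comm_ring_1) \<Rightarrow> (real \<Rightarrow> 'a) \<Rightarrow> real \<Rightarrow> 'a" where
  "ser_mult a b t = (\<Sum>s\<in>{s. a s \<noteq> 0 \<and> b (t - s) \<noteq> 0}. a s * b (t - s))"

definition edot :: "('n::finite \<Rightarrow> real) \<Rightarrow> ('n \<Rightarrow>\<^sub>0 nat) \<Rightarrow> real" where
  "edot e \<alpha> = (\<Sum>i\<in>UNIV. e i * real (Poly_Mapping.lookup \<alpha> i))"

text \<open>P(p^e x) for a polynomial P, as a series with coefficients in C(x).\<close>
definition psub :: "('n::{finite,linorder} \<Rightarrow> real) \<Rightarrow> 'n mpoly \<Rightarrow> real \<Rightarrow> 'n ratfun" where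
  "psub e P t = Fract (\<Sum>\<alpha>\<in>{\<alpha>\<in>Poly_Mapping.keys P. edot e \<alpha> = t}. Poly_Mapping.single \<alpha> (Poly_Mapping.lookup P \<alpha>)) 1"

text \<open>r(p^e x) for a rational function r = P/Q: the series g with g * Q(p^e x) = P(p^e x).\<close>
definition rsub :: "('n::{finite,linorder} \<Rightarrow> real) \<Rightarrow> 'n ratfun \<Rightarrow> real \<Rightarrow> 'n ratfun" where
  "rsub e r = (THE g. is_series g \<and>
      (\<exists>P Q. Q \<noteq> 0 \<and> r = Fract P Q \<and> ser_mult g (psub e Q) = psub e P))"

definition supnorm :: "('n::finite \<Rightarrow> real) \<Rightarrow> real" where
  "supnorm e = Max (range (\<lambda>i. \<bar>e i\<bar>))"

definition deg_eps :: "('n::{finite,linorder} \<Rightarrow> real) \<Rightarrow> 'n ratfun \<Rightarrow> real" where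
  "deg_eps e r = val (rsub e r)"

definition deg :: "'n::{finite,linorder} ratfun \<Rightarrow> real" where
  "deg r = - (INF e\<in>{e. \<exists>i. e i \<noteq> 0}. deg_eps e r / supnorm e)"

definition in_R :: "(real \<Rightarrow> 'n::{finite,linorder} ratfun) \<Rightarrow> bool" where
  "in_R f \<longleftrightarrow> is_series f \<and>
     (\<exists>C. \<forall>t. f t \<noteq> 0 \<and> t > val f \<longrightarrow> deg (f t) \<le> C * (t - val f))"

text \<open>f(p^e x): substitute in every coefficient, expand, and sum.\<close>
definition fsub :: "('n::{finite,linorder} \<Rightarrow> real) \<Rightarrow> (real \<Rightarrow> 'n ratfun) \<Rightarrow> real \<Rightarrow> 'n ratfun" where
  "fsub e f s = (\<Sum>t\<in>{t. f t \<noteq> 0 \<and> rsub e (f t) (s - t) \<noteq> 0}. rsub e (f t) (s - t))"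

end

theory Submission
  imports Defs
begin

text \<open>Substituting \<open>p\<^sup>\<epsilon>\<^sup>u x\<close> for \<open>p\<^sup>u x\<close> rescales all exponents of a coefficient by \<open>\<epsilon>\<close>,
  so the leading coefficient \<open>a = lc f\<close> contributes \<open>lc (a(p\<^sup>u x))\<close> at exponent
  \<open>val f + \<epsilon> val (a(p\<^sup>u x))\<close>. Every other coefficient \<open>a\<^sub>t\<close> sits at \<open>t \<ge> val f + d\<close> for a fixed
  gap \<open>d > 0\<close>, and \<open>a\<^sub>t(p\<^sup>\<epsilon>\<^sup>u x)\<close> has valuation at least \<open>-\<epsilon> |u| deg a\<^sub>t \<ge> -\<epsilon> |u| C (t - val f)\<close>
  by the growth condition defining \<open>R(x)\<close>. For small \<open>\<epsilon>\<close> these terms therefore all lie at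
  or above \<open>val f + d/2\<close>, strictly above the leading one.

  Making sense of \<open>r(p\<^sup>e x)\<close> for \<open>r = P/Q\<close> is most of the work: the equation
  \<open>g \<cdot> Q(p\<^sup>e x) = P(p\<^sup>e x)\<close> has a unique solution because these series form an integral
  domain in which every finitely supported nonzero series is invertible (by a geometric
  series, after normalising its leading term to \<open>1\<close>).\<close>

section \<open>Formal series\<close>

lemma finite_support_is_series: "finite {t. a t \<noteq> 0} \<Longrightarrow> is_series a"
  unfolding is_series_def by (auto intro: finite_subset)

lemma val_eqI: "a m \<noteq> 0 \<Longrightarrow> (\<And>s. a s \<noteq> 0 \<Longrightarrow> m \<le> s) \<Longrightarrow> val a = m"
  unfolding val_def by (rule Least_equality) auto

lemma val_eq_Min:
  assumes "is_series a" "a s \<noteq> 0"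
  shows "val a = Min {t. a t \<noteq> 0 \<and> t \<le> s}"
proof -
  let ?X = "{t. a t \<noteq> 0 \<and> t \<le> s}"
  have fin: "finite ?X" using assms(1) unfolding is_series_def by blast
  have "s \<in> ?X" using assms(2) by simp
  then have min: "Min ?X \<in> ?X" using fin by (intro Min_in) auto
  show ?thesis
  proof (rule val_eqI)
    show "a (Min ?X) \<noteq> 0" using min by simp
    show "Min ?X \<le> s'" if "a s' \<noteq> 0" for s'
      using that min Min_le[OF fin, of s'] by (cases "s' \<le> s") auto
  qed
qed

lemma val_nonzero: "is_series a \<Longrightarrow> a s \<noteq> 0 \<Longrightarrow> a (val a) \<noteq> 0"
  using Min_in[of "{t. a t \<noteq> 0 \<and> t \<le> s}"] by (auto simp: val_eq_Min is_series_def)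

lemma val_le: "is_series a \<Longrightarrow> a s \<noteq> 0 \<Longrightarrow> val a \<le> s"
  using Min_le[of "{t. a t \<noteq> 0 \<and> t \<le> s}" s] by (auto simp: val_eq_Min is_series_def)

lemma is_series_diff:
  "is_series a \<Longrightarrow> is_series b \<Longrightarrow> is_series (\<lambda>s. a s - (b s :: 'a::ab_group_add))"
  unfolding is_series_def
  by (rule allI, rule finite_subset[of _ "{t. a t \<noteq> 0 \<and> t \<le> _} \<union> {t. b t \<noteq> 0 \<and> t \<le> _}"]) auto

lemma series_gap:
  assumes "is_series a"
  obtains d where "0 < d" "\<And>t. a t \<noteq> 0 \<Longrightarrow> v < t \<Longrightarrow> v + d \<le> t"
proof
  define Y where "Y = insert (v + 1) {t. a t \<noteq> 0 \<and> v < t \<and> t \<le> v + 1}"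
  have "finite {t. a t \<noteq> 0 \<and> t \<le> v + 1}" using assms unfolding is_series_def by blast
  then have fin: "finite Y" unfolding Y_def by (auto elim: finite_subset[rotated])
  have "Min Y \<in> Y" using fin by (intro Min_in) (auto simp: Y_def)
  then show "0 < Min Y - v" by (auto simp: Y_def)
  show "v + (Min Y - v) \<le> t" if "a t \<noteq> 0" "v < t" for t
    using that Min_le[OF fin, of t] Min_le[OF fin, of "v + 1"]
    by (cases "t \<le> v + 1") (auto simp: Y_def)
qed

lemma val_scale:
  assumes "is_series g" "g s \<noteq> 0" "0 < c"
  shows "val (\<lambda>s. g (s / c)) = c * val g"
proof (rule val_eqI)
  show "g (c * val g / c) \<noteq> 0" using val_nonzero[OF assms(1,2)] assms(3) by simp
  show "c * val g \<le> s'" if "g (s' / c) \<noteq> 0" for s'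
    using val_le[OF assms(1) that] assms(3) by (simp add: field_simps)
qed

lemma lc_scale:
  assumes "is_series g" "g s \<noteq> 0" "0 < c"
  shows "lc (\<lambda>s. g (s / c)) = lc g"
  using assms by (simp add: lc_def val_scale)

lemma is_series_scale:
  assumes "is_series a" "0 < c"
  shows "is_series (\<lambda>s. a (s / c))"
  unfolding is_series_def
proof
  fix B
  have "{s. a (s / c) \<noteq> 0 \<and> s \<le> B} \<subseteq> (\<lambda>x. c * x) ` {x. a x \<noteq> 0 \<and> x \<le> B / c}"
  proof
    fix s assume s: "s \<in> {s. a (s / c) \<noteq> 0 \<and> s \<le> B}"
    then have "s / c \<in> {x. a x \<noteq> 0 \<and> x \<le> B / c}"
      using assms(2) by (simp add: divide_right_mono)
    then show "s \<in> (\<lambda>x. c * x) ` {x. a x \<noteq> 0 \<and> x \<le> B / c}"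
      by (rule rev_image_eqI) (use assms(2) in simp)
  qed
  then show "finite {s. a (s / c) \<noteq> 0 \<and> s \<le> B}"
    by (rule finite_subset[OF _ finite_imageI]) (use assms(1) in \<open>simp add: is_series_def\<close>)
qed

section \<open>The Cauchy product\<close>

lemma ser_mult_superset:
  assumes "finite F" "{s. a s \<noteq> 0 \<and> b (t - s) \<noteq> 0} \<subseteq> F"
  shows "ser_mult a b t = (\<Sum>s\<in>F. a s * b (t - s))"
  unfolding ser_mult_def by (rule sum.mono_neutral_left) (use assms in auto)

lemma ser_mult_neq_zeroE:
  assumes "ser_mult a b t \<noteq> 0"
  obtains s where "a s \<noteq> 0" "b (t - s) \<noteq> 0"
  using assms unfolding ser_mult_def by (auto elim!: sum.not_neutral_contains_not_neutral)

lemma ser_mult_commute: "ser_mult a b = ser_mult b (a :: real \<Rightarrow> 'a::comm_ring_1)"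
  unfolding ser_mult_def
  by (rule ext, rule sum.reindex_bij_witness[of _ "\<lambda>s. _ - s" "\<lambda>s. _ - s"]) (auto simp: mult.commute)

lemma ser_mult_cong:
  assumes "\<And>s. b (t - s) \<noteq> 0 \<Longrightarrow> a s = a' s"
  shows "ser_mult a b t = ser_mult a' b t"
  unfolding ser_mult_def using assms by (intro sum.cong) auto

lemma finite_ser_mult_terms:
  assumes "is_series a" "is_series b"
  shows "finite {s. a s \<noteq> 0 \<and> b (t - s) \<noteq> 0}"
proof (rule finite_subset)
  show "{s. a s \<noteq> 0 \<and> b (t - s) \<noteq> 0} \<subseteq> {s. a s \<noteq> 0 \<and> s \<le> t - val b}"
    using val_le[OF assms(2)] by force
  show "finite {s. a s \<noteq> 0 \<and> s \<le> t - val b}" using assms(1) unfolding is_series_def by blast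
qed

lemma is_series_ser_mult:
  assumes "is_series a" "is_series b"
  shows "is_series (ser_mult a b)"
  unfolding is_series_def
proof
  fix B
  let ?A = "{r. a r \<noteq> 0 \<and> r \<le> B - val b}" and ?C = "{q. b q \<noteq> 0 \<and> q \<le> B - val a}"
  have "{t. ser_mult a b t \<noteq> 0 \<and> t \<le> B} \<subseteq> (\<lambda>(r, q). r + q) ` (?A \<times> ?C)"
  proof
    fix t assume t: "t \<in> {t. ser_mult a b t \<noteq> 0 \<and> t \<le> B}"
    then obtain r where r: "a r \<noteq> 0" "b (t - r) \<noteq> 0" by (auto elim: ser_mult_neq_zeroE)
    then have "(r, t - r) \<in> ?A \<times> ?C" using t val_le[OF assms(1) r(1)] val_le[OF assms(2) r(2)] by auto
    then show "t \<in> (\<lambda>(r, q). r + q) ` (?A \<times> ?C)" by (rule rev_image_eqI) simp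
  qed
  moreover have "finite (?A \<times> ?C)" using assms unfolding is_series_def by blast
  ultimately show "finite {t. ser_mult a b t \<noteq> 0 \<and> t \<le> B}" by (auto intro: finite_subset)
qed

lemma finite_support_ser_mult:
  assumes "finite {t. a t \<noteq> 0}" "finite {t. b t \<noteq> 0}"
  shows "finite {t. ser_mult a b t \<noteq> 0}"
proof (rule finite_subset)
  show "{t. ser_mult a b t \<noteq> 0} \<subseteq> (\<lambda>(r, q). r + q) ` ({t. a t \<noteq> 0} \<times> {t. b t \<noteq> 0})"
    by (force elim: ser_mult_neq_zeroE)
qed (use assms in simp)

lemma ser_mult_at_val:
  assumes "is_series a" "is_series b"
  shows "ser_mult a b (val a + val b) = a (val a) * b (val b)"
proof -
  have "ser_mult a b (val a + val b) = (\<Sum>s\<in>{val a}. a s * b (val a + val b - s))"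
    using val_le[OF assms(1)] val_le[OF assms(2)] by (intro ser_mult_superset) force+
  then show ?thesis by simp
qed

lemma ser_mult_at_val_neq_zero:
  fixes a b :: "real \<Rightarrow> 'a::idom"
  assumes "is_series a" "is_series b" "a s \<noteq> 0" "b s' \<noteq> 0"
  shows "ser_mult a b (val a + val b) \<noteq> 0"
  using assms by (simp add: ser_mult_at_val val_nonzero)

lemma val_ser_mult:
  fixes a b :: "real \<Rightarrow> 'a::idom"
  assumes "is_series a" "is_series b" "a s \<noteq> 0" "b s' \<noteq> 0"
  shows "val (ser_mult a b) = val a + val b"
proof (rule val_eqI)
  show "ser_mult a b (val a + val b) \<noteq> 0" by (rule ser_mult_at_val_neq_zero[OF assms])
  show "val a + val b \<le> t" if "ser_mult a b t \<noteq> 0" for t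
    using that by (auto elim!: ser_mult_neq_zeroE dest!: val_le[OF assms(1)] val_le[OF assms(2)])
qed

lemma ser_mult_diff_left:
  fixes a b c :: "real \<Rightarrow> 'a::comm_ring_1"
  assumes "is_series a" "is_series b" "is_series c"
  shows "ser_mult (\<lambda>s. a s - b s) c t = ser_mult a c t - ser_mult b c t"
proof -
  let ?F = "{s. a s \<noteq> 0 \<and> c (t - s) \<noteq> 0} \<union> {s. b s \<noteq> 0 \<and> c (t - s) \<noteq> 0}"
  have fin: "finite ?F" using finite_ser_mult_terms assms by blast
  have "ser_mult (\<lambda>s. a s - b s) c t = (\<Sum>s\<in>?F. (a s - b s) * c (t - s))"
    by (rule ser_mult_superset[OF fin]) auto
  also have "\<dots> = (\<Sum>s\<in>?F. a s * c (t - s)) - (\<Sum>s\<in>?F. b s * c (t - s))"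
    by (simp add: left_diff_distrib sum_subtractf)
  also have "\<dots> = ser_mult a c t - ser_mult b c t"
    by (subst (1 2) ser_mult_superset[OF fin]) auto
  finally show ?thesis .
qed

lemma ser_mult_sum_left:
  fixes a :: "'b \<Rightarrow> real \<Rightarrow> 'a::comm_ring_1"
  assumes "finite K" "\<And>k. k \<in> K \<Longrightarrow> finite {s. a k s \<noteq> 0}"
  shows "ser_mult (\<lambda>s. \<Sum>k\<in>K. a k s) c t = (\<Sum>k\<in>K. ser_mult (a k) c t)"
proof -
  let ?F = "\<Union>k\<in>K. {s. a k s \<noteq> 0}"
  have fin: "finite ?F" using assms by blast
  have "ser_mult (\<lambda>s. \<Sum>k\<in>K. a k s) c t = (\<Sum>s\<in>?F. (\<Sum>k\<in>K. a k s) * c (t - s))"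
    by (rule ser_mult_superset[OF fin]) (auto elim!: sum.not_neutral_contains_not_neutral)
  also have "\<dots> = (\<Sum>k\<in>K. \<Sum>s\<in>?F. a k s * c (t - s))"
    by (simp add: sum_distrib_right sum.swap[of _ K])
  also have "\<dots> = (\<Sum>k\<in>K. ser_mult (a k) c t)"
    by (intro sum.cong refl ser_mult_superset[symmetric, OF fin]) auto
  finally show ?thesis .
qed

lemma finite_triple_terms:
  assumes "is_series a" "is_series b" "is_series c"
  shows "finite {(r, q). a r \<noteq> 0 \<and> b q \<noteq> 0 \<and> c (t - r - q) \<noteq> 0}"
proof (rule finite_subset)
  show "{(r, q). a r \<noteq> 0 \<and> b q \<noteq> 0 \<and> c (t - r - q) \<noteq> 0}
      \<subseteq> {r. a r \<noteq> 0 \<and> r \<le> t - val b - val c} \<times> {q. b q \<noteq> 0 \<and> q \<le> t - val a - val c}"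
    using val_le[OF assms(1)] val_le[OF assms(2)] val_le[OF assms(3)] by fastforce
  show "finite ({r. a r \<noteq> 0 \<and> r \<le> t - val b - val c} \<times> {q. b q \<noteq> 0 \<and> q \<le> t - val a - val c})"
    using assms unfolding is_series_def by blast
qed

lemma ser_mult_ser_mult_eq_triple_sum:
  fixes a b c :: "real \<Rightarrow> 'a::comm_ring_1"
  assumes "is_series a" "is_series b" "is_series c"
  shows "ser_mult (ser_mult a b) c t =
    (\<Sum>(r, q)\<in>{(r, q). a r \<noteq> 0 \<and> b q \<noteq> 0 \<and> c (t - r - q) \<noteq> 0}. a r * b q * c (t - r - q))"
proof -
  define T where "T = {(r, q). a r \<noteq> 0 \<and> b q \<noteq> 0 \<and> c (t - r - q) \<noteq> 0}"
  define S where "S = (\<lambda>(r, q). r + q) ` T"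
  define P where "P s = {r. a r \<noteq> 0 \<and> b (s - r) \<noteq> 0}" for s
  have finS: "finite S" unfolding S_def T_def using finite_triple_terms[OF assms] by simp
  have finP: "finite (P s)" for s unfolding P_def using finite_ser_mult_terms[OF assms(1,2)] .
  have "ser_mult (ser_mult a b) c t = (\<Sum>s\<in>S. ser_mult a b s * c (t - s))"
  proof (rule ser_mult_superset[OF finS], safe)
    fix s assume "ser_mult a b s \<noteq> 0" "c (t - s) \<noteq> 0"
    then obtain r where "a r \<noteq> 0" "b (s - r) \<noteq> 0" "c (t - s) \<noteq> 0" by (auto elim: ser_mult_neq_zeroE)
    then have "(r, s - r) \<in> T" by (simp add: T_def)
    then show "s \<in> S" unfolding S_def by (rule rev_image_eqI) simp
  qed
  also have "\<dots> = (\<Sum>s\<in>S. \<Sum>r\<in>P s. a r * b (s - r) * c (t - s))"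
    by (simp add: ser_mult_def P_def sum_distrib_right)
  also have "\<dots> = (\<Sum>(s, r)\<in>Sigma S P. a r * b (s - r) * c (t - s))"
    by (rule sum.Sigma[OF finS]) (use finP in blast)
  also have "\<dots> = (\<Sum>(r, q)\<in>T. a r * b q * c (t - r - q))"
    by (rule sum.reindex_bij_witness[of _ "\<lambda>(r, q). (r + q, r)" "\<lambda>(s, r). (r, s - r)"])
      (auto simp: S_def P_def T_def diff_diff_eq)
  finally show ?thesis unfolding T_def .
qed

lemma ser_mult_assoc:
  fixes a b c :: "real \<Rightarrow> 'a::comm_ring_1"
  assumes "is_series a" "is_series b" "is_series c"
  shows "ser_mult (ser_mult a b) c = ser_mult a (ser_mult b c)"
proof
  fix t
  have "ser_mult a (ser_mult b c) t = ser_mult (ser_mult b c) a t"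
    by (simp add: ser_mult_commute)
  also have "\<dots> = (\<Sum>(r, q)\<in>{(r, q). b r \<noteq> 0 \<and> c q \<noteq> 0 \<and> a (t - r - q) \<noteq> 0}.
      b r * c q * a (t - r - q))"
    by (rule ser_mult_ser_mult_eq_triple_sum[OF assms(2,3,1)])
  also have "\<dots> = (\<Sum>(r, q)\<in>{(r, q). a r \<noteq> 0 \<and> b q \<noteq> 0 \<and> c (t - r - q) \<noteq> 0}.
      a r * b q * c (t - r - q))"
    by (rule sum.reindex_bij_witness[of _ "\<lambda>(r, q). (q, t - r - q)" "\<lambda>(r, q). (t - r - q, r)"])
      (auto simp: algebra_simps)
  finally show "ser_mult (ser_mult a b) c t = ser_mult a (ser_mult b c) t"
    by (simp add: ser_mult_ser_mult_eq_triple_sum[OF assms])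
qed

lemma ser_mult_cancel_right:
  fixes a b c :: "real \<Rightarrow> 'a::idom"
  assumes "is_series a" "is_series b" "is_series c" "c s \<noteq> 0"
    and "ser_mult a c = ser_mult b c"
  shows "a = b"
proof (rule ccontr)
  assume "a \<noteq> b"
  then obtain s' where "a s' - b s' \<noteq> 0" by auto
  moreover have "ser_mult (\<lambda>s. a s - b s) c t = 0" for t
    using assms(5) by (simp add: ser_mult_diff_left[OF assms(1-3)])
  ultimately show False
    using ser_mult_at_val_neq_zero[OF is_series_diff[OF assms(1,2)] assms(3) _ assms(4)] by blast
qed

definition ser_monom :: "real \<Rightarrow> 'a \<Rightarrow> real \<Rightarrow> 'a::zero" where
  "ser_monom t0 c t = (if t = t0 then c else 0)"

lemma finite_support_ser_monom: "finite {t. ser_monom t0 c t \<noteq> 0}"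
  by (rule finite_subset[of _ "{t0}"]) (auto simp: ser_monom_def)

lemma ser_mult_monom_left: "ser_mult (ser_monom t0 c) a t = c * (a (t - t0) :: 'a::comm_ring_1)"
  by (subst ser_mult_superset[of "{t0}"]) (auto simp: ser_monom_def)

lemma ser_mult_monom_right: "ser_mult a (ser_monom t0 c) t = c * (a (t - t0) :: 'a::comm_ring_1)"
  by (simp add: ser_mult_commute[of a] ser_mult_monom_left)

section \<open>Inverting finitely supported series\<close>

primrec ser_pow :: "(real \<Rightarrow> 'a::comm_ring_1) \<Rightarrow> nat \<Rightarrow> real \<Rightarrow> 'a" where
  "ser_pow a 0 = ser_monom 0 1"
| "ser_pow a (Suc k) = ser_mult (ser_pow a k) a"

lemma finite_support_ser_pow: "finite {t. a t \<noteq> 0} \<Longrightarrow> finite {t. ser_pow a k t \<noteq> 0}"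
  by (induction k) (simp_all add: finite_support_ser_monom finite_support_ser_mult)

lemma ser_pow_support_ge:
  assumes "\<And>t. a t \<noteq> 0 \<Longrightarrow> d \<le> t"
  shows "ser_pow a k t \<noteq> 0 \<Longrightarrow> real k * d \<le> t"
proof (induction k arbitrary: t)
  case 0 then show ?case by (simp add: ser_monom_def split: if_splits)
next
  case (Suc k)
  then obtain s where "ser_pow a k s \<noteq> 0" "a (t - s) \<noteq> 0" by (auto elim: ser_mult_neq_zeroE)
  with Suc.IH[of s] assms[of "t - s"] show ?case by (simp add: algebra_simps)
qed

text \<open>If \<open>a\<close> is supported in \<open>[d, \<infinity>)\<close>, then \<open>a\<^sup>k\<close> vanishes
  below \<open>k d\<close>, so at \<open>t\<close> only the terms \<open>k \<le> \<lceil>t / d\<rceil>\<close> contribute.\<close>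

definition ser_geometric :: "(real \<Rightarrow> 'a::comm_ring_1) \<Rightarrow> real \<Rightarrow> real \<Rightarrow> 'a" where
  "ser_geometric a d t = (\<Sum>k\<le>nat \<lceil>t / d\<rceil>. ser_pow a k t)"

context
  fixes a :: "real \<Rightarrow> 'a::comm_ring_1" and d :: real
  assumes d_pos: "0 < d" and support_ge: "\<And>t. a t \<noteq> 0 \<Longrightarrow> d \<le> t"
begin

lemma ser_geometric_eq:
  assumes "nat \<lceil>t / d\<rceil> \<le> K"
  shows "ser_geometric a d t = (\<Sum>k\<le>K. ser_pow a k t)"
  unfolding ser_geometric_def
proof (rule sum.mono_neutral_left)
  show "\<forall>k\<in>{..K} - {..nat \<lceil>t / d\<rceil>}. ser_pow a k t = 0"
  proof
    fix k assume "k \<in> {..K} - {..nat \<lceil>t / d\<rceil>}"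
    then have "real (nat \<lceil>t / d\<rceil>) < real k" by simp
    then have "t / d < real k" using real_nat_ceiling_ge[of "t / d"] by linarith
    then have "t < real k * d" using d_pos by (simp add: field_simps)
    then show "ser_pow a k t = 0" using ser_pow_support_ge[OF support_ge, where k = k and t = t] by (meson not_le)
  qed
qed (use assms in auto)

lemma ser_geometric_eq_if_le:
  assumes "t \<le> t'"
  shows "ser_geometric a d t = (\<Sum>k\<le>nat \<lceil>t' / d\<rceil>. ser_pow a k t)"
  using assms d_pos by (intro ser_geometric_eq nat_mono ceiling_mono divide_right_mono) auto

lemma is_series_ser_geometric:
  assumes "finite {t. a t \<noteq> 0}"
  shows "is_series (ser_geometric a d)"
  unfolding is_series_def
proof
  fix B
  have "{t. ser_geometric a d t \<noteq> 0 \<and> t \<le> B} \<subseteq> (\<Union>k\<le>nat \<lceil>B / d\<rceil>. {t. ser_pow a k t \<noteq> 0})"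
  proof safe
    fix t assume "ser_geometric a d t \<noteq> 0" "t \<le> B"
    then have "(\<Sum>k\<le>nat \<lceil>B / d\<rceil>. ser_pow a k t) \<noteq> 0" using ser_geometric_eq_if_le[of t B] by simp
    then show "t \<in> (\<Union>k\<le>nat \<lceil>B / d\<rceil>. {t. ser_pow a k t \<noteq> 0})"
      by (auto elim: sum.not_neutral_contains_not_neutral)
  qed
  then show "finite {t. ser_geometric a d t \<noteq> 0 \<and> t \<le> B}"
    by (rule finite_subset) (use finite_support_ser_pow[OF assms] in blast)
qed

lemma ser_mult_ser_geometric:
  assumes fin: "finite {t. a t \<noteq> 0}"
  shows "ser_mult (ser_geometric a d) (\<lambda>t. ser_monom 0 1 t - a t) = ser_monom 0 1"
proof
  fix t
  define K where "K = nat \<lceil>t / d\<rceil>"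
  have series: "is_series (ser_pow a k)" "is_series a" "is_series (ser_monom 0 (1::'a))" for k
    using fin by (simp_all add: finite_support_is_series finite_support_ser_pow finite_support_ser_monom)
  have nonneg: "0 \<le> t" if "ser_monom 0 1 t - a t \<noteq> 0" for t
    using that support_ge[of t] d_pos by (cases "t = 0") (auto simp: ser_monom_def)
  have "ser_mult (ser_geometric a d) (\<lambda>t. ser_monom 0 1 t - a t) t
      = ser_mult (\<lambda>s. \<Sum>k\<le>K. ser_pow a k s) (\<lambda>t. ser_monom 0 1 t - a t) t"
    unfolding K_def by (rule ser_mult_cong, rule ser_geometric_eq_if_le) (use nonneg in fastforce)
  also have "\<dots> = (\<Sum>k\<le>K. ser_mult (ser_pow a k) (\<lambda>t. ser_monom 0 1 t - a t) t)"
    by (rule ser_mult_sum_left) (simp_all add: fin finite_support_ser_pow)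
  also have "\<dots> = (\<Sum>k\<le>K. ser_pow a k t - ser_pow a (Suc k) t)"
  proof (rule sum.cong[OF refl])
    fix k
    have "ser_mult (ser_pow a k) (\<lambda>t. ser_monom 0 1 t - a t) t
        = ser_mult (\<lambda>t. ser_monom 0 1 t - a t) (ser_pow a k) t"
      by (rule fun_cong[OF ser_mult_commute])
    also have "\<dots> = ser_mult (ser_monom 0 1) (ser_pow a k) t - ser_mult a (ser_pow a k) t"
      by (rule ser_mult_diff_left[OF series(3,2,1)])
    also have "\<dots> = ser_pow a k t - ser_pow a (Suc k) t"
      by (simp add: ser_mult_monom_left ser_mult_commute[of a "ser_pow a k"])
    finally show "ser_mult (ser_pow a k) (\<lambda>t. ser_monom 0 1 t - a t) t = ser_pow a k t - ser_pow a (Suc k) t" .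
  qed
  also have "\<dots> = ser_pow a 0 t - ser_pow a (Suc K) t" by (rule sum_telescope)
  also have "ser_pow a (Suc K) t = 0"
  proof -
    have "t / d \<le> real K" unfolding K_def by (rule real_nat_ceiling_ge)
    then have "t < real (Suc K) * d" using d_pos by (simp add: field_simps)
    then show ?thesis using ser_pow_support_ge[OF support_ge, where k = "Suc K" and t = t] by (meson not_le)
  qed
  finally show "ser_mult (ser_geometric a d) (\<lambda>t. ser_monom 0 1 t - a t) t = ser_monom 0 1 t" by simp
qed

end

lemma ser_mult_inverse_one_minus_exists:
  fixes a :: "real \<Rightarrow> 'a::comm_ring_1"
  assumes fin: "finite {t. a t \<noteq> 0}" and pos: "\<And>t. a t \<noteq> 0 \<Longrightarrow> 0 < t"
  obtains h where "is_series h" "ser_mult h (\<lambda>t. ser_monom 0 1 t - a t) = ser_monom 0 1"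
proof -
  obtain d where "0 < d" "\<And>t. a t \<noteq> 0 \<Longrightarrow> 0 < t \<Longrightarrow> 0 + d \<le> t"
    using series_gap[OF finite_support_is_series[OF fin]] by blast
  then have d: "0 < d" "\<And>t. a t \<noteq> 0 \<Longrightarrow> d \<le> t" using pos by auto
  show ?thesis
    using that[OF is_series_ser_geometric ser_mult_ser_geometric] d fin by blast
qed

lemma ser_mult_inverse_exists:
  fixes A :: "real \<Rightarrow> 'a::field"
  assumes fin: "finite {t. A t \<noteq> 0}" and nz: "A s \<noteq> 0"
  obtains h where "is_series h" "ser_mult h A = ser_monom 0 1"
proof -
  have sA: "is_series A" using fin by (rule finite_support_is_series)
  define t0 where "t0 = val A"
  have a0: "A t0 \<noteq> 0" unfolding t0_def using val_nonzero[OF sA nz] .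
  \<comment> \<open>Multiplying by \<open>m\<close> normalises \<open>A\<close> to the form \<open>1 - a\<close> with \<open>a\<close> supported in \<open>(0, \<infinity>)\<close>.\<close>
  define m where "m = ser_monom (- t0) (inverse (A t0))"
  define a where "a t = ser_monom 0 1 t - ser_mult m A t" for t
  have mA: "ser_mult m A t = inverse (A t0) * A (t + t0)" for t
    by (simp add: m_def ser_mult_monom_left)
  have "{t. a t \<noteq> 0} \<subseteq> {t. ser_monom 0 (1::'a) t \<noteq> 0} \<union> {t. ser_mult m A t \<noteq> 0}"
    by (auto simp: a_def)
  moreover have "finite {t. ser_mult m A t \<noteq> 0}"
    unfolding m_def by (rule finite_support_ser_mult[OF finite_support_ser_monom fin])
  ultimately have fin_a: "finite {t. a t \<noteq> 0}"
    using finite_support_ser_monom by (blast intro: finite_subset)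
  have pos: "0 < t" if "a t \<noteq> 0" for t
  proof -
    have "A (t + t0) \<noteq> 0" "t \<noteq> 0"
      using that a0 by (auto simp: a_def mA ser_monom_def split: if_splits)
    then show ?thesis using val_le[OF sA, of "t + t0"] by (simp add: t0_def)
  qed
  obtain g where g: "is_series g" "ser_mult g (\<lambda>t. ser_monom 0 1 t - a t) = ser_monom 0 1"
    using ser_mult_inverse_one_minus_exists[OF fin_a pos] by blast
  have sm: "is_series m" unfolding m_def by (rule finite_support_is_series[OF finite_support_ser_monom])
  show ?thesis
  proof
    show "is_series (ser_mult g m)" by (rule is_series_ser_mult[OF g(1) sm])
    have "ser_mult (ser_mult g m) A = ser_mult g (ser_mult m A)"
      by (rule ser_mult_assoc[OF g(1) sm sA])
    also have "ser_mult m A = (\<lambda>t. ser_monom 0 1 t - a t)" by (simp add: a_def)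
    finally show "ser_mult (ser_mult g m) A = ser_monom 0 1" using g(2) by simp
  qed
qed

section \<open>Substitution into polynomials\<close>

lemma Fract_1_eq_0_iff: "Fract (x :: 'a::idom) 1 = 0 \<longleftrightarrow> x = 0"
  by (simp add: Zero_fract_def eq_fract)

lemma Fract_1_sum: "(\<Sum>i\<in>I. Fract (f i :: 'a::idom) 1) = Fract (\<Sum>i\<in>I. f i) 1"
  by (induction I rule: infinite_finite_induct) (simp_all add: Zero_fract_def)

definition weight_part :: "('n::finite \<Rightarrow> real) \<Rightarrow> 'n mpoly \<Rightarrow> real \<Rightarrow> 'n mpoly" where
  "weight_part e P t = (\<Sum>\<alpha>\<in>{\<alpha>\<in>Poly_Mapping.keys P. edot e \<alpha> = t}.
    Poly_Mapping.single \<alpha> (Poly_Mapping.lookup P \<alpha>))"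

lemma psub_eq_Fract_weight_part: "psub e P t = Fract (weight_part e P t) 1"
  unfolding psub_def weight_part_def ..

lemma lookup_weight_part:
  "Poly_Mapping.lookup (weight_part e P t) \<beta> = (if edot e \<beta> = t then Poly_Mapping.lookup P \<beta> else 0)"
proof -
  have "Poly_Mapping.lookup (weight_part e P t) \<beta> =
      (\<Sum>\<alpha>\<in>{\<alpha>\<in>Poly_Mapping.keys P. edot e \<alpha> = t}. if \<alpha> = \<beta> then Poly_Mapping.lookup P \<alpha> else 0)"
    unfolding weight_part_def lookup_sum by (intro sum.cong) (auto simp: lookup_single)
  then show ?thesis by (simp add: in_keys_iff)
qed

lemma weight_part_eq_0_iff: "weight_part e P t = 0 \<longleftrightarrow> (\<forall>\<alpha>\<in>Poly_Mapping.keys P. edot e \<alpha> \<noteq> t)"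
  by (auto simp: poly_mapping_eq_iff fun_eq_iff lookup_weight_part in_keys_iff)

lemma psub_neq_0_iff: "psub e P t \<noteq> 0 \<longleftrightarrow> (\<exists>\<alpha>\<in>Poly_Mapping.keys P. edot e \<alpha> = t)"
  unfolding psub_eq_Fract_weight_part Fract_1_eq_0_iff weight_part_eq_0_iff by blast

lemma finite_support_psub: "finite {t. psub e P t \<noteq> 0}"
  by (rule finite_subset[of _ "edot e ` Poly_Mapping.keys P"]) (auto simp: psub_neq_0_iff)

lemma is_series_psub: "is_series (psub e P)"
  by (rule finite_support_is_series[OF finite_support_psub])

lemma psub_not_zero: "P \<noteq> 0 \<Longrightarrow> \<exists>t. psub e P t \<noteq> 0"
  by (metis psub_neq_0_iff keys_eq_empty ex_in_conv)

lemma edot_add: "edot e (\<alpha> + \<beta>) = edot e \<alpha> + edot e \<beta>"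
  unfolding edot_def by (simp add: lookup_add algebra_simps sum.distrib)

lemma edot_scale: "edot (\<lambda>i. c * e i) \<alpha> = c * edot e \<alpha>"
  unfolding edot_def by (simp add: sum_distrib_left mult.assoc)

lemma weight_part_sum: "weight_part e (\<Sum>i\<in>I. X i) t = (\<Sum>i\<in>I. weight_part e (X i) t)"
  by (intro poly_mapping_eqI) (simp add: lookup_weight_part lookup_sum)

lemma keys_weight_part: "\<alpha> \<in> Poly_Mapping.keys (weight_part e X s) \<Longrightarrow> edot e \<alpha> = s"
  by (simp add: in_keys_iff lookup_weight_part split: if_splits)

lemma sum_weight_part:
  assumes "finite F" "edot e ` Poly_Mapping.keys X \<subseteq> F"
  shows "(\<Sum>s\<in>F. weight_part e X s) = X"
proof (rule poly_mapping_eqI)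
  fix \<beta>
  show "Poly_Mapping.lookup (\<Sum>s\<in>F. weight_part e X s) \<beta> = Poly_Mapping.lookup X \<beta>"
    using assms by (auto simp: lookup_sum lookup_weight_part in_keys_iff image_subset_iff)
qed

lemma weight_part_homogeneous:
  "(\<And>\<alpha>. \<alpha> \<in> Poly_Mapping.keys X \<Longrightarrow> edot e \<alpha> = s) \<Longrightarrow> weight_part e X t = (if s = t then X else 0)"
  by (intro poly_mapping_eqI) (auto simp: lookup_weight_part in_keys_iff)

lemma weight_part_mult_weight_part:
  "weight_part e (weight_part e X s * weight_part e Y s') t = (if s + s' = t then weight_part e X s * weight_part e Y s' else 0)"
proof (rule weight_part_homogeneous)
  show "edot e \<alpha> = s + s'" if "\<alpha> \<in> Poly_Mapping.keys (weight_part e X s * weight_part e Y s')" for \<alpha>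
    using that keys_mult[of "weight_part e X s" "weight_part e Y s'"] by (auto simp: edot_add dest!: keys_weight_part)
qed

lemma weight_part_mult:
  assumes "finite F" "edot e ` Poly_Mapping.keys P \<subseteq> F"
  shows "weight_part e (P * Q) t = (\<Sum>s\<in>F. weight_part e P s * weight_part e Q (t - s))"
proof -
  define G where "G = edot e ` Poly_Mapping.keys Q"
  have finG: "finite G" unfolding G_def by simp
  have Q_zero: "weight_part e Q s' = 0" if "s' \<notin> G" for s'
    using that by (auto simp: G_def weight_part_eq_0_iff)
  have "P * Q = (\<Sum>s\<in>F. weight_part e P s) * (\<Sum>s'\<in>G. weight_part e Q s')"
    using sum_weight_part[OF assms] sum_weight_part[OF finG, of e Q] by (simp add: G_def)
  also have "\<dots> = (\<Sum>s\<in>F. \<Sum>s'\<in>G. weight_part e P s * weight_part e Q s')"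
    by (rule sum_product)
  finally have "P * Q = (\<Sum>s\<in>F. \<Sum>s'\<in>G. weight_part e P s * weight_part e Q s')" .
  then have "weight_part e (P * Q) t = (\<Sum>s\<in>F. \<Sum>s'\<in>G. if s' = t - s then weight_part e P s * weight_part e Q s' else 0)"
    by (auto simp: weight_part_sum weight_part_mult_weight_part intro!: sum.cong)
  also have "\<dots> = (\<Sum>s\<in>F. weight_part e P s * weight_part e Q (t - s))"
    using finG Q_zero by (intro sum.cong refl) auto
  finally show ?thesis .
qed

lemma psub_mult: "ser_mult (psub e P) (psub e Q) = psub e (P * Q)"
proof
  fix t
  define F where "F = edot e ` Poly_Mapping.keys P"
  have finF: "finite F" unfolding F_def by simp
  have "ser_mult (psub e P) (psub e Q) t = (\<Sum>s\<in>F. psub e P s * psub e Q (t - s))"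
    by (rule ser_mult_superset[OF finF]) (auto simp: F_def psub_neq_0_iff)
  also have "\<dots> = psub e (P * Q) t"
    by (simp add: psub_eq_Fract_weight_part Fract_1_sum weight_part_mult[OF finF] F_def)
  finally show "ser_mult (psub e P) (psub e Q) t = psub e (P * Q) t" .
qed

lemma psub_scale: "c \<noteq> 0 \<Longrightarrow> psub (\<lambda>i. c * e i) P s = psub e P (s / c)"
  unfolding psub_def by (simp add: edot_scale field_simps)

section \<open>Substitution into rational functions\<close>

lemma psub_quotient_unique:
  assumes "is_series g1" "is_series g2" "Q1 \<noteq> 0" "Q2 \<noteq> 0" "Fract P1 Q1 = Fract P2 Q2"
    and eq1: "ser_mult g1 (psub e Q1) = psub e P1" and eq2: "ser_mult g2 (psub e Q2) = psub e P2"
  shows "g1 = g2"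
proof -
  define H where "H = psub e (Q1 * Q2)"
  have sH: "is_series H" unfolding H_def by (rule is_series_psub)
  obtain s where s: "H s \<noteq> 0" unfolding H_def using psub_not_zero[of "Q1 * Q2" e] assms(3,4) by auto
  have "ser_mult g1 H = psub e (P1 * Q2)"
    unfolding H_def psub_mult[symmetric] ser_mult_assoc[OF assms(1) is_series_psub is_series_psub, symmetric]
    by (simp add: eq1 psub_mult)
  also have "P1 * Q2 = P2 * Q1" using assms(3-5) by (simp add: eq_fract)
  also have "psub e (P2 * Q1) = ser_mult g2 H"
    unfolding H_def mult.commute[of Q1] psub_mult[symmetric]
      ser_mult_assoc[OF assms(2) is_series_psub is_series_psub, symmetric]
    by (simp add: eq2 psub_mult)
  finally show ?thesis by (rule ser_mult_cancel_right[OF assms(1,2) sH s])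
qed

lemma psub_quotient_exists:
  assumes "Q \<noteq> 0"
  shows "\<exists>g. is_series g \<and> ser_mult g (psub e Q) = psub e P"
proof -
  obtain s where "psub e Q s \<noteq> 0" using psub_not_zero[OF assms] by blast
  then obtain h where h: "is_series h" "ser_mult h (psub e Q) = ser_monom 0 1"
    using ser_mult_inverse_exists[OF finite_support_psub] by blast
  have "ser_mult (ser_mult (psub e P) h) (psub e Q) = psub e P"
    by (simp add: ser_mult_assoc[OF is_series_psub h(1) is_series_psub] h(2) ser_mult_monom_right fun_eq_iff)
  then show ?thesis using is_series_ser_mult[OF is_series_psub h(1)] by blast
qed

lemma rsub_eqI:
  assumes "is_series g" "Q \<noteq> 0" "ser_mult g (psub e Q) = psub e P"
  shows "rsub e (Fract P Q) = g"
  unfolding rsub_def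
proof (rule the_equality)
  show "is_series g \<and> (\<exists>P' Q'. Q' \<noteq> 0 \<and> Fract P Q = Fract P' Q' \<and> ser_mult g (psub e Q') = psub e P')"
    using assms by blast
  fix g' assume "is_series g' \<and> (\<exists>P' Q'. Q' \<noteq> 0 \<and> Fract P Q = Fract P' Q' \<and> ser_mult g' (psub e Q') = psub e P')"
  then show "g' = g" using psub_quotient_unique[OF _ assms(1) _ assms(2) _ _ assms(3)] by metis
qed

lemma rsub_Fract:
  assumes "Q \<noteq> 0"
  shows "is_series (rsub e (Fract P Q))" "ser_mult (rsub e (Fract P Q)) (psub e Q) = psub e P"
  using psub_quotient_exists[OF assms] rsub_eqI[OF _ assms] by metis+

lemma is_series_rsub: "is_series (rsub e r)"
  by (cases r) (simp add: rsub_Fract)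

lemma rsub_not_zero:
  assumes "r \<noteq> 0"
  shows "\<exists>s. rsub e r s \<noteq> 0"
proof -
  obtain P Q where r: "r = Fract P Q" "Q \<noteq> 0" by (cases r)
  then have "P \<noteq> 0" using assms by (auto simp: Zero_fract_def eq_fract)
  then obtain t where "psub e P t \<noteq> 0" using psub_not_zero by blast
  then have "ser_mult (rsub e r) (psub e Q) t \<noteq> 0" using rsub_Fract(2)[OF r(2), of e P] by (simp add: r(1))
  then show ?thesis by (auto elim: ser_mult_neq_zeroE)
qed

lemma ser_mult_scale:
  fixes a b :: "real \<Rightarrow> 'a::comm_ring_1"
  assumes "c \<noteq> 0"
  shows "ser_mult (\<lambda>s. a (s / c)) (\<lambda>s. b (s / c)) t = ser_mult a b (t / c)"
  unfolding ser_mult_def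
proof (rule sum.reindex_bij_witness[of _ "\<lambda>s. c * s" "\<lambda>s. s / c"])
  fix s
  have "(t - s) / c = t / c - s / c" by (simp add: diff_divide_distrib)
  then show "c * (s / c) = s" "a (s / c) * b (t / c - s / c) = a (s / c) * b ((t - s) / c)"
    "s \<in> {s. a (s / c) \<noteq> 0 \<and> b ((t - s) / c) \<noteq> 0} \<Longrightarrow> s / c \<in> {s. a s \<noteq> 0 \<and> b (t / c - s) \<noteq> 0}"
    using assms by simp_all
next
  fix s
  have "(t - c * s) / c = t / c - s" using assms by (simp add: diff_divide_distrib)
  then show "c * s / c = s"
    "s \<in> {s. a s \<noteq> 0 \<and> b (t / c - s) \<noteq> 0} \<Longrightarrow> c * s \<in> {s. a (s / c) \<noteq> 0 \<and> b ((t - s) / c) \<noteq> 0}"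
    using assms by simp_all
qed

lemma rsub_scale:
  assumes "0 < c"
  shows "rsub (\<lambda>i. c * u i) r = (\<lambda>s. rsub u r (s / c))"
proof -
  obtain P Q where r: "r = Fract P Q" "Q \<noteq> 0" by (cases r)
  have psub_eq: "psub (\<lambda>i. c * u i) R = (\<lambda>s. psub u R (s / c))" for R
    using assms by (simp add: psub_scale fun_eq_iff)
  have "ser_mult (\<lambda>s. rsub u r (s / c)) (psub (\<lambda>i. c * u i) Q) = psub (\<lambda>i. c * u i) P"
  proof
    fix t
    have "ser_mult (\<lambda>s. rsub u r (s / c)) (psub (\<lambda>i. c * u i) Q) t = ser_mult (rsub u r) (psub u Q) (t / c)"
      unfolding psub_eq by (rule ser_mult_scale) (use assms in simp)
    also have "\<dots> = psub (\<lambda>i. c * u i) P t"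
      using rsub_Fract(2)[OF r(2), of u P] by (simp add: r(1) psub_eq)
    finally show "ser_mult (\<lambda>s. rsub u r (s / c)) (psub (\<lambda>i. c * u i) Q) t = psub (\<lambda>i. c * u i) P t" .
  qed
  then have "rsub (\<lambda>i. c * u i) (Fract P Q) = (\<lambda>s. rsub u r (s / c))"
    by (rule rsub_eqI[OF is_series_scale[OF is_series_rsub assms] r(2)])
  then show ?thesis by (simp add: r(1))
qed

lemma val_rsub_scale: "0 < c \<Longrightarrow> r \<noteq> 0 \<Longrightarrow> val (rsub (\<lambda>i. c * u i) r) = c * val (rsub u r)"
  using rsub_not_zero[of r u] by (auto simp: rsub_scale intro: val_scale[OF is_series_rsub])

lemma lc_rsub_scale: "0 < c \<Longrightarrow> r \<noteq> 0 \<Longrightarrow> lc (rsub (\<lambda>i. c * u i) r) = lc (rsub u r)"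
  using rsub_not_zero[of r u] by (auto simp: rsub_scale intro: lc_scale[OF is_series_rsub])

section \<open>Valuation bounds\<close>

definition monomial_degree :: "('n::finite \<Rightarrow>\<^sub>0 nat) \<Rightarrow> real" where
  "monomial_degree \<alpha> = (\<Sum>i\<in>UNIV. real (Poly_Mapping.lookup \<alpha> i))"

lemma supnorm_ge: "\<bar>e i\<bar> \<le> supnorm e"
  unfolding supnorm_def by (rule Max_ge) auto

lemma supnorm_nonneg: "0 \<le> supnorm e"
  using supnorm_ge[of e undefined] by linarith

lemma supnorm_pos: "e i \<noteq> 0 \<Longrightarrow> 0 < supnorm e"
  using supnorm_ge[of e i] by linarith

lemma supnorm_scale_le: "0 \<le> c \<Longrightarrow> supnorm (\<lambda>i. c * u i) \<le> c * supnorm u"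
  unfolding supnorm_def[of "\<lambda>i. c * u i"]
  by (rule Max.boundedI) (auto simp: abs_mult supnorm_ge mult_left_mono)

lemma abs_edot_le: "\<bar>edot e \<alpha>\<bar> \<le> supnorm e * monomial_degree \<alpha>"
proof -
  have "\<bar>edot e \<alpha>\<bar> \<le> (\<Sum>i\<in>UNIV. \<bar>e i * real (Poly_Mapping.lookup \<alpha> i)\<bar>)"
    unfolding edot_def by (rule sum_abs)
  also have "\<dots> \<le> (\<Sum>i\<in>UNIV. supnorm e * real (Poly_Mapping.lookup \<alpha> i))"
    by (intro sum_mono) (simp add: abs_mult mult_right_mono supnorm_ge)
  finally show ?thesis by (simp add: monomial_degree_def sum_distrib_left)
qed

lemma val_psub_ge:
  assumes "P \<noteq> 0"
  shows "- (supnorm e * (\<Sum>\<alpha>\<in>Poly_Mapping.keys P. monomial_degree \<alpha>)) \<le> val (psub e P)"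
proof -
  obtain t where "psub e P t \<noteq> 0" using psub_not_zero[OF assms] by blast
  then obtain \<alpha> where \<alpha>: "\<alpha> \<in> Poly_Mapping.keys P" "edot e \<alpha> = val (psub e P)"
    using val_nonzero[OF is_series_psub] psub_neq_0_iff by metis
  have "monomial_degree \<alpha> \<le> (\<Sum>\<alpha>\<in>Poly_Mapping.keys P. monomial_degree \<alpha>)"
    using \<alpha>(1) by (intro member_le_sum) (auto simp: monomial_degree_def intro: sum_nonneg)
  then have "supnorm e * monomial_degree \<alpha> \<le> supnorm e * (\<Sum>\<alpha>\<in>Poly_Mapping.keys P. monomial_degree \<alpha>)"
    by (rule mult_left_mono[OF _ supnorm_nonneg])
  then show ?thesis using abs_edot_le[of e \<alpha>] \<alpha>(2) by linarith
qed

lemma val_psub_le: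
  assumes "\<beta> \<in> Poly_Mapping.keys Q"
  shows "val (psub e Q) \<le> supnorm e * monomial_degree \<beta>"
  using val_le[OF is_series_psub, of e Q "edot e \<beta>"] assms abs_edot_le[of e \<beta>] psub_neq_0_iff
  by fastforce

lemma rsub_val_lower_bound:
  assumes "r \<noteq> 0"
  obtains M where "\<And>e. - M * supnorm e \<le> val (rsub e r)"
proof -
  obtain P Q where r: "r = Fract P Q" "Q \<noteq> 0" by (cases r)
  have P: "P \<noteq> 0" using assms r by (auto simp: Zero_fract_def eq_fract)
  obtain \<beta> where \<beta>: "\<beta> \<in> Poly_Mapping.keys Q" using r(2) by (metis keys_eq_empty ex_in_conv)
  have "- ((\<Sum>\<alpha>\<in>Poly_Mapping.keys P. monomial_degree \<alpha>) + monomial_degree \<beta>) * supnorm e \<le> val (rsub e r)" for e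
  proof -
    obtain s where s: "rsub e r s \<noteq> 0" using rsub_not_zero[OF assms] by blast
    obtain s' where s': "psub e Q s' \<noteq> 0" using psub_not_zero[OF r(2)] by blast
    have "val (psub e P) = val (rsub e r) + val (psub e Q)"
      using val_ser_mult[OF is_series_rsub is_series_psub s s'] rsub_Fract(2)[OF r(2)] by (simp add: r(1))
    then show ?thesis using val_psub_ge[OF P, of e] val_psub_le[OF \<beta>, of e]
      by (simp add: algebra_simps)
  qed
  then show ?thesis using that by blast
qed

lemma rsub_support_ge_deg:
  assumes "r \<noteq> 0" "rsub e r s \<noteq> 0"
  shows "- deg r * supnorm e \<le> s"
proof -
  obtain M where M: "\<And>e. - M * supnorm e \<le> val (rsub e r)" using rsub_val_lower_bound[OF assms(1)] by blast
  have val_s: "val (rsub e r) \<le> s" by (rule val_le[OF is_series_rsub assms(2)])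
  show ?thesis
  proof (cases "\<exists>i. e i \<noteq> 0")
    case False
    then show ?thesis using M[of e] val_s by (simp add: supnorm_def)
  next
    case True
    have "bdd_below ((\<lambda>e. deg_eps e r / supnorm e) ` {e. \<exists>i. e i \<noteq> 0})"
      using M by (intro bdd_belowI2[of _ "- M"]) (auto simp: deg_eps_def field_simps dest: supnorm_pos)
    then have "- deg r \<le> deg_eps e r / supnorm e"
      unfolding deg_def using True by (auto intro: cINF_lower)
    then show ?thesis
      using True val_s by (auto simp: deg_eps_def field_simps dest: supnorm_pos)
  qed
qed

lemma in_R_rsub_support_ge:
  assumes "in_R f"
  obtains C where "0 \<le> C"
    "\<And>e t s. f t \<noteq> 0 \<Longrightarrow> val f < t \<Longrightarrow> rsub e (f t) s \<noteq> 0 \<Longrightarrow>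
      - (C * supnorm e * (t - val f)) \<le> s"
proof -
  obtain C where C: "\<And>t. f t \<noteq> 0 \<Longrightarrow> val f < t \<Longrightarrow> deg (f t) \<le> C * (t - val f)"
    using assms unfolding in_R_def by blast
  have "- (max C 0 * supnorm e * (t - val f)) \<le> s"
    if t: "f t \<noteq> 0" "val f < t" "rsub e (f t) s \<noteq> 0" for e t s
  proof -
    have "deg (f t) * supnorm e \<le> max C 0 * (t - val f) * supnorm e"
      using C[OF t(1,2)] t(2) by (intro mult_right_mono supnorm_nonneg) (auto intro: order_trans mult_right_mono)
    then show ?thesis using rsub_support_ge_deg[of "f t" e s] t by (fastforce simp: algebra_simps)
  qed
  then show ?thesis using that[of "max C 0"] by simp
qed

lemma eventually_rsub_tail_ge:
  assumes "in_R f"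
  shows "\<forall>\<^sub>F \<epsilon> in at_right 0. \<forall>t s. f t \<noteq> 0 \<longrightarrow> val f < t \<longrightarrow> rsub (\<lambda>i. \<epsilon> * u i) (f t) s \<noteq> 0 \<longrightarrow>
    - ((t - val f) / 2) \<le> s"
proof -
  obtain C where C: "0 \<le> C" and tail: "\<And>e t s. f t \<noteq> 0 \<Longrightarrow> val f < t \<Longrightarrow> rsub e (f t) s \<noteq> 0 \<Longrightarrow>
      - (C * supnorm e * (t - val f)) \<le> s"
    using in_R_rsub_support_ge[OF assms] by blast
  have "((\<lambda>\<epsilon>. C * supnorm u * \<epsilon>) \<longlongrightarrow> 0) (at_right 0)"
    by (auto intro!: tendsto_eq_intros)
  then have "\<forall>\<^sub>F \<epsilon> in at_right 0. C * supnorm u * \<epsilon> < 1 / 2"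
    by (rule order_tendstoD) simp
  then have "\<forall>\<^sub>F \<epsilon> in at_right 0. 0 < \<epsilon> \<and> C * supnorm u * \<epsilon> < 1 / 2"
    by (intro eventually_conj eventually_at_right_less)
  then show ?thesis
  proof (rule eventually_mono, safe)
    fix \<epsilon> t s assume \<epsilon>: "0 < \<epsilon>" "C * supnorm u * \<epsilon> < 1 / 2"
      and t: "f t \<noteq> 0" "val f < t" "rsub (\<lambda>i. \<epsilon> * u i) (f t) s \<noteq> 0"
    have "C * supnorm (\<lambda>i. \<epsilon> * u i) \<le> 1 / 2"
      using \<epsilon> mult_left_mono[OF supnorm_scale_le C, of \<epsilon> u] by (simp add: algebra_simps)
    then have "C * supnorm (\<lambda>i. \<epsilon> * u i) * (t - val f) \<le> 1 / 2 * (t - val f)"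
      using t(2) by (intro mult_right_mono) auto
    then show "- ((t - val f) / 2) \<le> s" using tail[OF t] by linarith
  qed
qed

section \<open>Substitution into series\<close>

lemma fsub_eq_leading:
  assumes "is_series f" "lc f \<noteq> 0"
    and gap: "\<And>t. f t \<noteq> 0 \<Longrightarrow> val f < t \<Longrightarrow> val f + d \<le> t"
    and tail: "\<And>t s. f t \<noteq> 0 \<Longrightarrow> val f < t \<Longrightarrow> rsub e (f t) s \<noteq> 0 \<Longrightarrow>
      - ((t - val f) / 2) \<le> s"
    and "s < val f + d / 2"
  shows "fsub e f s = rsub e (lc f) (s - val f)"
proof -
  have "{t. f t \<noteq> 0 \<and> rsub e (f t) (s - t) \<noteq> 0} \<subseteq> {val f}"
  proof safe
    fix t assume t: "f t \<noteq> 0" "rsub e (f t) (s - t) \<noteq> 0"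
    show "t = val f"
    proof (rule ccontr)
      assume "t \<noteq> val f"
      then have "val f < t" using val_le[OF assms(1) t(1)] by simp
      then show False using gap[OF t(1) \<open>val f < t\<close>] tail[OF t(1) \<open>val f < t\<close> t(2)] assms(5)
        by (simp add: field_simps)
    qed
  qed
  then have "fsub e f s = (\<Sum>t\<in>{val f}. rsub e (f t) (s - t))"
    unfolding fsub_def using assms(2) by (intro sum.mono_neutral_left) (auto simp: lc_def)
  then show ?thesis by (simp add: lc_def)
qed

lemma val_lc_fsub:
  assumes "is_series f" "lc f \<noteq> 0"
    and gap: "\<And>t. f t \<noteq> 0 \<Longrightarrow> val f < t \<Longrightarrow> val f + d \<le> t"
    and tail: "\<And>t s. f t \<noteq> 0 \<Longrightarrow> val f < t \<Longrightarrow> rsub e (f t) s \<noteq> 0 \<Longrightarrow>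
      - ((t - val f) / 2) \<le> s"
    and small: "val (rsub e (lc f)) < d / 2"
  shows "val (fsub e f) = val f + val (rsub e (lc f))" "lc (fsub e f) = lc (rsub e (lc f))"
proof -
  let ?g = "rsub e (lc f)"
  note lead = fsub_eq_leading[OF assms(1,2) gap tail]
  have at_val: "fsub e f (val f + val ?g) = lc ?g" using small by (simp add: lead lc_def)
  show "val (fsub e f) = val f + val ?g"
  proof (rule val_eqI)
    obtain s0 where "?g s0 \<noteq> 0" using rsub_not_zero[OF assms(2)] by blast
    then show "fsub e f (val f + val ?g) \<noteq> 0"
      using at_val val_nonzero[OF is_series_rsub] by (simp add: lc_def)
    show "val f + val ?g \<le> s" if "fsub e f s \<noteq> 0" for s
      using that small val_le[where a = ?g and s = "s - val f", OF is_series_rsub] lead[where s = s]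
      by (cases "s < val f + d / 2") auto
  qed
  then show "lc (fsub e f) = lc ?g" using at_val by (simp add: lc_def)
qed

theorem proposition2p3:
  fixes f :: "real \<Rightarrow> 'n::{finite,linorder} ratfun"
  assumes "in_R f" and "f \<noteq> (\<lambda>_. 0)"
  shows "\<forall>u :: 'n \<Rightarrow> real. \<exists>\<delta>>0. \<forall>\<epsilon>. 0 < \<epsilon> \<and> \<epsilon> < \<delta> \<longrightarrow>
           lc (rsub u (lc f)) = lc (fsub (\<lambda>i. \<epsilon> * u i) f) \<and>
           val f + \<epsilon> * val (rsub u (lc f)) = val (fsub (\<lambda>i. \<epsilon> * u i) f)"
proof
  fix u :: "'n \<Rightarrow> real"
  have sf: "is_series f" using assms(1) unfolding in_R_def by blast
  obtain t1 where "f t1 \<noteq> 0" using assms(2) by auto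
  then have lc: "lc f \<noteq> 0" unfolding lc_def by (rule val_nonzero[OF sf])
  obtain d where d: "0 < d" "\<And>t. f t \<noteq> 0 \<Longrightarrow> val f < t \<Longrightarrow> val f + d \<le> t"
    using series_gap[OF sf] by blast
  have "((\<lambda>\<epsilon>. \<epsilon> * val (rsub u (lc f))) \<longlongrightarrow> 0) (at_right 0)"
    by (auto intro!: tendsto_eq_intros)
  then have "\<forall>\<^sub>F \<epsilon> in at_right 0. \<epsilon> * val (rsub u (lc f)) < d / 2"
    by (rule order_tendstoD) (simp add: d(1))
  with eventually_rsub_tail_ge[OF assms(1), of u] eventually_at_right_less[of 0]
  have "\<forall>\<^sub>F \<epsilon> in at_right 0. lc (rsub u (lc f)) = lc (fsub (\<lambda>i. \<epsilon> * u i) f) \<and>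
           val f + \<epsilon> * val (rsub u (lc f)) = val (fsub (\<lambda>i. \<epsilon> * u i) f)"
    by eventually_elim
      (use val_lc_fsub[OF sf lc d(2)] in \<open>simp add: val_rsub_scale lc_rsub_scale lc\<close>)
  then show "\<exists>\<delta>>0. \<forall>\<epsilon>. 0 < \<epsilon> \<and> \<epsilon> < \<delta> \<longrightarrow>
           lc (rsub u (lc f)) = lc (fsub (\<lambda>i. \<epsilon> * u i) f) \<and>
           val f + \<epsilon> * val (rsub u (lc f)) = val (fsub (\<lambda>i. \<epsilon> * u i) f)"
    by (auto simp: eventually_at_right_field)
qed

end
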